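(* Let $G$ be a finitely generated torsion-free nilpotent group and suppose the decomposition $\overline{G}=R_1\times R_2$ into rational subgroups matches the decomposition $G=G_1\times G_2$. Let $X_i=R_iZ(\overline{G})\cap G$. If $H_1,H_2$ are subgroups of $G$ such that $X_i=H_iZ(G)$ for $i=1,2$ and $Z(G)=Z(H_1)\times Z(H_2)$ (internal direct product), then $G=H_1\times H_2$.
   Context: $\overline{G}$ is the rational closure of $G$ (torsion-free nilpotent, containing $G$, uniquely divisible, each element has a positive power in $G$); for $H\le G$, $\overline{H}$ is the set of elements of $\overline{G}$ having a positive power in $H$. A subgroup is rational if closed under taking all $n$-th roots. A decomposition $\overline{G}=R_1\times R_2$ matches $G=G_1\times G_2$ if $\overline{G_i}\,Z(\overline{G})=R_i\,Z(\overline{G})$ for $i=1,2$. *)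

theory Defs
  imports "HOL-Algebra.Algebra"
begin

definition grp_center :: "('a, 'b) monoid_scheme \<Rightarrow> 'a set" where
  "grp_center G = {z \<in> carrier G. \<forall>x \<in> carrier G. z \<otimes>\<^bsub>G\<^esub> x = x \<otimes>\<^bsub>G\<^esub> z}"

fun upper_central :: "('a, 'b) monoid_scheme \<Rightarrow> nat \<Rightarrow> 'a set" where
  "upper_central G 0 = {\<one>\<^bsub>G\<^esub>}"
| "upper_central G (Suc n) = {x \<in> carrier G. \<forall>y \<in> carrier G.
      x \<otimes>\<^bsub>G\<^esub> y \<otimes>\<^bsub>G\<^esub> inv\<^bsub>G\<^esub> x \<otimes>\<^bsub>G\<^esub> inv\<^bsub>G\<^esub> y \<in> upper_central G n}"

definition nilpotent_group :: "('a, 'b) monoid_scheme \<Rightarrow> bool" where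
  "nilpotent_group G \<longleftrightarrow> group G \<and> (\<exists>n. upper_central G n = carrier G)"

definition torsion_free :: "('a, 'b) monoid_scheme \<Rightarrow> bool" where
  "torsion_free G \<longleftrightarrow> (\<forall>x \<in> carrier G. \<forall>n::nat. n > 0 \<longrightarrow> x [^]\<^bsub>G\<^esub> n = \<one>\<^bsub>G\<^esub> \<longrightarrow> x = \<one>\<^bsub>G\<^esub>)"

definition finitely_generated :: "('a, 'b) monoid_scheme \<Rightarrow> bool" where
  "finitely_generated G \<longleftrightarrow> (\<exists>S. finite S \<and> S \<subseteq> carrier G \<and> generate G S = carrier G)"

definition uniquely_divisible :: "('a, 'b) monoid_scheme \<Rightarrow> bool" where
  "uniquely_divisible G \<longleftrightarrow>
     (\<forall>x \<in> carrier G. \<forall>n::nat. n > 0 \<longrightarrow> (\<exists>!y. y \<in> carrier G \<and> y [^]\<^bsub>G\<^esub> n = x))"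

definition is_rational_closure :: "('a, 'b) monoid_scheme \<Rightarrow> 'a set \<Rightarrow> bool" where
  "is_rational_closure Gbar G \<longleftrightarrow>
     group Gbar \<and> subgroup G Gbar \<and> torsion_free Gbar \<and> nilpotent_group Gbar \<and>
     uniquely_divisible Gbar \<and>
     (\<forall>x \<in> carrier Gbar. \<exists>n::nat. n > 0 \<and> x [^]\<^bsub>Gbar\<^esub> n \<in> G)"

definition rat_closure :: "('a, 'b) monoid_scheme \<Rightarrow> 'a set \<Rightarrow> 'a set" where
  "rat_closure Gbar H = {x \<in> carrier Gbar. \<exists>n::nat. n > 0 \<and> x [^]\<^bsub>Gbar\<^esub> n \<in> H}"

definition rational_subgroup :: "('a, 'b) monoid_scheme \<Rightarrow> 'a set \<Rightarrow> bool" where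
  "rational_subgroup Gbar R \<longleftrightarrow> subgroup R Gbar \<and>
     (\<forall>x \<in> carrier Gbar. \<forall>n::nat. n > 0 \<longrightarrow> x [^]\<^bsub>Gbar\<^esub> n \<in> R \<longrightarrow> x \<in> R)"

definition internal_direct_product :: "('a, 'b) monoid_scheme \<Rightarrow> 'a set \<Rightarrow> 'a set \<Rightarrow> bool" where
  "internal_direct_product K A B \<longleftrightarrow>
     A \<lhd> K \<and> B \<lhd> K \<and> A \<inter> B = {\<one>\<^bsub>K\<^esub>} \<and> A <#>\<^bsub>K\<^esub> B = carrier K"

abbreviation sub_grp :: "('a, 'b) monoid_scheme \<Rightarrow> 'a set \<Rightarrow> ('a, 'b) monoid_scheme" where
  "sub_grp Gbar H \<equiv> Gbar\<lparr>carrier := H\<rparr>"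

end

theory Submission
  imports Defs
begin

text \<open>
  Normal subgroups with trivial intersection commute elementwise, so \<open>R\<^sub>1\<close> and \<open>R\<^sub>2\<close> commute,
  and hence so do \<open>R\<^sub>1 Z(\<overline>G)\<close> and \<open>R\<^sub>2 Z(\<overline>G)\<close>; since \<open>H\<^sub>i \<subseteq> X\<^sub>i\<close>, the subgroups \<open>H\<^sub>1\<close> and \<open>H\<^sub>2\<close>
  commute. Matching gives \<open>G\<^sub>i \<subseteq> X\<^sub>i = H\<^sub>i Z(G)\<close>, so \<open>G = G\<^sub>1 G\<^sub>2 \<subseteq> H\<^sub>1 H\<^sub>2 Z(G)\<close>, and
  \<open>Z(G) = Z(H\<^sub>1) Z(H\<^sub>2) \<subseteq> H\<^sub>1 H\<^sub>2\<close> yields \<open>G = H\<^sub>1 H\<^sub>2\<close>. An element of \<open>H\<^sub>1 \<inter> H\<^sub>2\<close> commutes with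
  both factors, so it lies in \<open>Z(H\<^sub>1) \<inter> Z(H\<^sub>2) = 1\<close>. Commuting factors of a product are normal.
\<close>

lemma grp_center_commute:
  "z \<in> grp_center G \<Longrightarrow> x \<in> carrier G \<Longrightarrow> z \<otimes>\<^bsub>G\<^esub> x = x \<otimes>\<^bsub>G\<^esub> z"
  unfolding grp_center_def by blast

lemma (in group) subgroup_grp_center: "subgroup (grp_center G) G"
proof
  show "grp_center G \<subseteq> carrier G"
    unfolding grp_center_def by blast
  show "\<one> \<in> grp_center G"
    unfolding grp_center_def by simp
next
  fix z w assume z: "z \<in> grp_center G" and w: "w \<in> grp_center G"
  then have zw: "z \<in> carrier G" "w \<in> carrier G"
    unfolding grp_center_def by auto
  have "z \<otimes> w \<otimes> x = x \<otimes> (z \<otimes> w)" if x: "x \<in> carrier G" for x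
    using zw x grp_center_commute[OF z x] grp_center_commute[OF w x]
    by (metis m_assoc)
  then show "z \<otimes> w \<in> grp_center G"
    using zw unfolding grp_center_def by simp
next
  fix z assume z: "z \<in> grp_center G"
  then have zc: "z \<in> carrier G"
    unfolding grp_center_def by auto
  have "inv z \<otimes> x = x \<otimes> inv z" if x: "x \<in> carrier G" for x
  proof -
    have "inv z \<otimes> x = inv z \<otimes> (z \<otimes> x) \<otimes> inv z"
      using zc x grp_center_commute[OF z x] by (simp add: m_assoc)
    also have "\<dots> = x \<otimes> inv z"
      using zc x by (simp add: m_assoc[symmetric])
    finally show ?thesis .
  qed
  then show "inv z \<in> grp_center G"
    using zc unfolding grp_center_def by simp
qed

lemma (in monoid) subset_set_mult_right:
  "A \<subseteq> carrier G \<Longrightarrow> \<one> \<in> B \<Longrightarrow> A \<subseteq> A <#> B"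
  unfolding set_mult_def by force

lemma (in monoid) subset_rat_closure: "H \<subseteq> carrier G \<Longrightarrow> H \<subseteq> rat_closure G H"
  unfolding rat_closure_def by (auto intro!: exI[of _ "1::nat"])

lemma (in group) commute_set_mult_center:
  assumes A: "A \<subseteq> carrier G" and B: "B \<subseteq> carrier G"
    and comm: "\<And>a b. a \<in> A \<Longrightarrow> b \<in> B \<Longrightarrow> a \<otimes> b = b \<otimes> a"
    and x: "x \<in> A <#> grp_center G" and y: "y \<in> B <#> grp_center G"
  shows "x \<otimes> y = y \<otimes> x"
proof -
  obtain a z b w where ab: "a \<in> A" "b \<in> B" and zw: "z \<in> grp_center G" "w \<in> grp_center G"
    and xy: "x = a \<otimes> z" "y = b \<otimes> w"
    using x y unfolding set_mult_def by blast
  have carr: "a \<in> carrier G" "b \<in> carrier G" "z \<in> carrier G" "w \<in> carrier G"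
    using ab zw A B subgroup.subset[OF subgroup_grp_center] by auto
  have "x \<otimes> y = a \<otimes> (z \<otimes> b) \<otimes> w"
    using carr by (simp add: xy m_assoc)
  also have "\<dots> = (a \<otimes> b) \<otimes> (z \<otimes> w)"
    using carr grp_center_commute[OF zw(1) carr(2)] by (simp add: m_assoc)
  also have "\<dots> = (b \<otimes> a) \<otimes> (w \<otimes> z)"
    using comm[OF ab] grp_center_commute[OF zw(1) carr(4)] by simp
  also have "\<dots> = b \<otimes> (w \<otimes> a) \<otimes> z"
    using carr grp_center_commute[OF zw(2) carr(1)] by (simp add: m_assoc)
  also have "\<dots> = y \<otimes> x"
    using carr by (simp add: xy m_assoc)
  finally show ?thesis .
qed

lemma (in group) carrier_eq_set_mult_of_center_decomposition:
  assumes H1: "subgroup H1 G" and H2: "subgroup H2 G"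
    and comm: "\<And>a b. a \<in> H1 \<Longrightarrow> b \<in> H2 \<Longrightarrow> a \<otimes> b = b \<otimes> a"
    and gen: "carrier G \<subseteq> (H1 <#> grp_center G) <#> (H2 <#> grp_center G)"
    and center: "grp_center G \<subseteq> grp_center (G\<lparr>carrier := H1\<rparr>) <#> grp_center (G\<lparr>carrier := H2\<rparr>)"
  shows "H1 <#> H2 = carrier G"
proof
  show "H1 <#> H2 \<subseteq> carrier G"
    using H1 H2 by (simp add: subgroup.subset setmult_subset_G)
next
  show "carrier G \<subseteq> H1 <#> H2"
  proof
    fix g assume "g \<in> carrier G"
    then have "g \<in> (H1 <#> grp_center G) <#> (H2 <#> grp_center G)"
      using gen by blast
    then obtain x y where x: "x \<in> H1 <#> grp_center G" and y: "y \<in> H2 <#> grp_center G"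
      and g: "g = x \<otimes> y"
      unfolding set_mult_def by blast
    obtain h1 z1 h2 z2 where h: "h1 \<in> H1" "h2 \<in> H2"
      and z: "z1 \<in> grp_center G" "z2 \<in> grp_center G" and xy: "x = h1 \<otimes> z1" "y = h2 \<otimes> z2"
      using x y unfolding set_mult_def by blast
    have "z1 \<otimes> z2 \<in> grp_center G"
      using subgroup.m_closed[OF subgroup_grp_center z] .
    then obtain c1 c2 where c1: "c1 \<in> grp_center (G\<lparr>carrier := H1\<rparr>)"
      and c2: "c2 \<in> grp_center (G\<lparr>carrier := H2\<rparr>)" and zc: "z1 \<otimes> z2 = c1 \<otimes> c2"
      using center unfolding set_mult_def by blast
    have c: "c1 \<in> H1" "c2 \<in> H2"
      using c1 c2 unfolding grp_center_def by auto
    have carr: "h1 \<in> carrier G" "h2 \<in> carrier G" "c1 \<in> carrier G" "c2 \<in> carrier G"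
      "z1 \<in> carrier G" "z2 \<in> carrier G"
      using h c z subgroup.subset[OF H1] subgroup.subset[OF H2] subgroup.subset[OF subgroup_grp_center]
      by auto
    have "g = h1 \<otimes> h2 \<otimes> (z1 \<otimes> z2)"
      using carr grp_center_commute[OF z(1) carr(2)]
      by (simp add: g xy m_assoc) (simp add: m_assoc[symmetric])
    also have "\<dots> = (h1 \<otimes> c1) \<otimes> (h2 \<otimes> c2)"
    proof -
      have "h2 \<otimes> (c1 \<otimes> c2) = c1 \<otimes> (h2 \<otimes> c2)"
        using carr comm[OF c(1) h(2)] by (simp add: m_assoc[symmetric])
      then show ?thesis
        using carr by (simp add: zc m_assoc)
    qed
    finally have "g = (h1 \<otimes> c1) \<otimes> (h2 \<otimes> c2)" .
    moreover have "h1 \<otimes> c1 \<in> H1" "h2 \<otimes> c2 \<in> H2"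
      using subgroup.m_closed[OF H1 h(1) c(1)] subgroup.m_closed[OF H2 h(2) c(2)] .
    ultimately show "g \<in> H1 <#> H2"
      unfolding set_mult_def by blast
  qed
qed

lemma (in group) internal_direct_product_of_center_decomposition:
  assumes H1: "subgroup H1 G" and H2: "subgroup H2 G"
    and comm: "\<And>a b. a \<in> H1 \<Longrightarrow> b \<in> H2 \<Longrightarrow> a \<otimes> b = b \<otimes> a"
    and gen: "carrier G \<subseteq> (H1 <#> grp_center G) <#> (H2 <#> grp_center G)"
    and center: "grp_center G \<subseteq> grp_center (G\<lparr>carrier := H1\<rparr>) <#> grp_center (G\<lparr>carrier := H2\<rparr>)"
    and disjoint: "grp_center (G\<lparr>carrier := H1\<rparr>) \<inter> grp_center (G\<lparr>carrier := H2\<rparr>) \<subseteq> {\<one>}"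
  shows "internal_direct_product G H1 H2"
proof -
  interpret group_disjoint_sum G H1 H2
    by (rule group_disjoint_sum.intro[OF is_group H1 H2])
  have prod: "H1 <#> H2 = carrier G"
    using carrier_eq_set_mult_of_center_decomposition[OF H1 H2 comm gen center] .
  have "H1 \<inter> H2 \<subseteq> grp_center (G\<lparr>carrier := H1\<rparr>) \<inter> grp_center (G\<lparr>carrier := H2\<rparr>)"
  proof
    fix x assume x: "x \<in> H1 \<inter> H2"
    have "x \<otimes> y = y \<otimes> x" if "y \<in> H1" for y
      using comm[of y x] that x by simp
    moreover have "x \<otimes> y = y \<otimes> x" if "y \<in> H2" for y
      using comm[of x y] that x by simp
    ultimately show "x \<in> grp_center (G\<lparr>carrier := H1\<rparr>) \<inter> grp_center (G\<lparr>carrier := H2\<rparr>)"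
      using x unfolding grp_center_def by auto
  qed
  then have "H1 \<inter> H2 = {\<one>}"
    using disjoint subset_one by blast
  moreover have "H1 \<lhd> G"
    by (rule commuting_imp_normal1[OF equalityD2[OF prod]]) (rule comm)
  moreover have "H2 \<lhd> G"
    by (rule commuting_imp_normal2[OF equalityD2[OF prod]]) (rule comm)
  ultimately show ?thesis
    using prod unfolding internal_direct_product_def by blast
qed

lemma (in group) subset_of_inter_eq_set_mult_center:
  assumes K: "subgroup K G" and H: "subgroup H (G\<lparr>carrier := K\<rparr>)"
    and S: "S \<inter> K = H <#> grp_center (G\<lparr>carrier := K\<rparr>)"
  shows "H \<subseteq> S"
proof -
  interpret K: group "G\<lparr>carrier := K\<rparr>"
    using subgroup_imp_group[OF K] .
  have "H \<subseteq> H <#>\<^bsub>G\<lparr>carrier := K\<rparr>\<^esub> grp_center (G\<lparr>carrier := K\<rparr>)"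
    using subgroup.subset[OF H] subgroup.one_closed[OF K.subgroup_grp_center]
    by (intro K.subset_set_mult_right) auto
  then show ?thesis
    using S by auto
qed

lemma (in group) subset_of_matching_set_mult_center:
  assumes K: "subgroup K G" and A: "A \<subseteq> K"
    and match: "rat_closure G A <#> grp_center G = R <#> grp_center G"
    and S: "(R <#> grp_center G) \<inter> K = H <#> grp_center (G\<lparr>carrier := K\<rparr>)"
  shows "A \<subseteq> H <#> grp_center (G\<lparr>carrier := K\<rparr>)"
proof -
  have "A \<subseteq> rat_closure G A"
    using A subgroup.subset[OF K] by (intro subset_rat_closure) blast
  also have "\<dots> \<subseteq> rat_closure G A <#> grp_center G"
    by (rule subset_set_mult_right) (auto simp: rat_closure_def subgroup.one_closed[OF subgroup_grp_center])
  finally show ?thesis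
    using A match S by blast
qed

lemma (in group) internal_direct_product_commute:
  assumes "internal_direct_product G A B" and "a \<in> A" and "b \<in> B"
  shows "a \<otimes> b = b \<otimes> a"
  using normal_imp_commuting[of A B a b] assms unfolding internal_direct_product_def by blast

theorem mainTheorem13:
  fixes Gbar :: "('a, 'b) monoid_scheme"
    and G G1 G2 R1 R2 H1 H2 :: "'a set"
  assumes fg: "finitely_generated (sub_grp Gbar G)"
    and nil: "nilpotent_group (sub_grp Gbar G)"
    and tf: "torsion_free (sub_grp Gbar G)"
    and closure: "is_rational_closure Gbar G"
    and decG: "internal_direct_product (sub_grp Gbar G) G1 G2"
    and rat1: "rational_subgroup Gbar R1"
    and rat2: "rational_subgroup Gbar R2"
    and decR: "internal_direct_product Gbar R1 R2"
    and match1: "rat_closure Gbar G1 <#>\<^bsub>Gbar\<^esub> grp_center Gbar = R1 <#>\<^bsub>Gbar\<^esub> grp_center Gbar"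
    and match2: "rat_closure Gbar G2 <#>\<^bsub>Gbar\<^esub> grp_center Gbar = R2 <#>\<^bsub>Gbar\<^esub> grp_center Gbar"
    and H1: "subgroup H1 (sub_grp Gbar G)"
    and H2: "subgroup H2 (sub_grp Gbar G)"
    and X1: "(R1 <#>\<^bsub>Gbar\<^esub> grp_center Gbar) \<inter> G = H1 <#>\<^bsub>Gbar\<^esub> grp_center (sub_grp Gbar G)"
    and X2: "(R2 <#>\<^bsub>Gbar\<^esub> grp_center Gbar) \<inter> G = H2 <#>\<^bsub>Gbar\<^esub> grp_center (sub_grp Gbar G)"
    and ZG: "internal_direct_product (sub_grp Gbar (grp_center (sub_grp Gbar G)))
               (grp_center (sub_grp Gbar H1)) (grp_center (sub_grp Gbar H2))"
  shows "internal_direct_product (sub_grp Gbar G) H1 H2"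
proof -
  have "group Gbar" and G: "subgroup G Gbar"
    using closure by (auto simp: is_rational_closure_def)
  interpret group Gbar by fact
  interpret K: group "sub_grp Gbar G"
    using subgroup_imp_group[OF G] .
  have "R1 \<subseteq> carrier Gbar" "R2 \<subseteq> carrier Gbar"
    using decR normal_imp_subgroup subgroup.subset unfolding internal_direct_product_def by blast+
  then have comm_H: "a \<otimes>\<^bsub>Gbar\<^esub> b = b \<otimes>\<^bsub>Gbar\<^esub> a" if "a \<in> H1" "b \<in> H2" for a b
    using commute_set_mult_center[OF _ _ internal_direct_product_commute[OF decR]] that
      subset_of_inter_eq_set_mult_center[OF G H1 X1] subset_of_inter_eq_set_mult_center[OF G H2 X2]
    by blast
  have "G1 \<subseteq> G" "G2 \<subseteq> G" and G12: "G1 <#>\<^bsub>Gbar\<^esub> G2 = G"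
    using decG normal_imp_subgroup subgroup.subset unfolding internal_direct_product_def by force+
  then have gen: "carrier (sub_grp Gbar G) \<subseteq> (H1 <#>\<^bsub>Gbar\<^esub> grp_center (sub_grp Gbar G))
      <#>\<^bsub>Gbar\<^esub> (H2 <#>\<^bsub>Gbar\<^esub> grp_center (sub_grp Gbar G))"
    using subset_of_matching_set_mult_center[OF G _ match1 X1] subset_of_matching_set_mult_center[OF G _ match2 X2]
      mono_set_mult[of G1 _ G2 _ Gbar] by simp
  have center: "grp_center (sub_grp Gbar G) \<subseteq> grp_center (sub_grp Gbar H1) <#>\<^bsub>Gbar\<^esub> grp_center (sub_grp Gbar H2)"
    and disjoint: "grp_center (sub_grp Gbar H1) \<inter> grp_center (sub_grp Gbar H2) \<subseteq> {\<one>\<^bsub>Gbar\<^esub>}"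
    using ZG by (auto simp: internal_direct_product_def)
  show ?thesis
  proof (rule K.internal_direct_product_of_center_decomposition[OF H1 H2])
    show "a \<otimes>\<^bsub>sub_grp Gbar G\<^esub> b = b \<otimes>\<^bsub>sub_grp Gbar G\<^esub> a" if "a \<in> H1" "b \<in> H2" for a b
      using comm_H[OF that] by simp
  qed (use gen center disjoint in simp_all)
qed

end
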